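(* Let $\lambda$ be a strict partition and $c$ an integer with $1\le c<\ell(\lambda)$. Then the expected number of horizontal adjacencies lying in column $c$ of a uniformly random shifted standard Young tableau of shape $[\lambda]^{\mathrm{sh}}$ equals $1$.
   Context: For strict $\lambda=(\lambda_1>\dots>\lambda_\ell>0)$, $[\lambda]^{\mathrm{sh}}=\{(i,j+i-1):i\in[\ell],j\in[\lambda_i]\}$ (row $i$, column $j$). A shifted standard Young tableau is a bijection $T:[\lambda]^{\mathrm{sh}}\to[|\lambda|]$ increasing along rows and columns. For $u=(i,j)$, $(T,u)$ is a horizontal adjacency if $(i,j+1)\in[\lambda]^{\mathrm{sh}}$ and $T(i,j+1)=T(u)+1$; it lies in column $j$. *)

theory Defs
  imports Complex_Main
begin

text \<open>A strict partition is a strictly decreasing list of positive naturals;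
  lam ! (i-1) is the part lambda_i (rows are 1-indexed).\<close>
definition strict_partition :: "nat list \<Rightarrow> bool" where
  "strict_partition lam \<longleftrightarrow> sorted_wrt (>) lam \<and> 0 \<notin> set lam"

definition shifted_diagram :: "nat list \<Rightarrow> (nat \<times> nat) set" where
  "shifted_diagram lam =
     {(i, j + i - 1) | i j. 1 \<le> i \<and> i \<le> length lam \<and> 1 \<le> j \<and> j \<le> lam ! (i - 1)}"

definition shifted_SYT :: "nat list \<Rightarrow> ((nat \<times> nat) \<Rightarrow> nat) set" where
  "shifted_SYT lam =
     {T. bij_betw T (shifted_diagram lam) {1..sum_list lam}
       \<and> (\<forall>u. u \<notin> shifted_diagram lam \<longrightarrow> T u = 0)
       \<and> (\<forall>i j. (i, j) \<in> shifted_diagram lam \<longrightarrow> (i, j + 1) \<in> shifted_diagram lam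
                \<longrightarrow> T (i, j) < T (i, j + 1))
       \<and> (\<forall>i j. (i, j) \<in> shifted_diagram lam \<longrightarrow> (i + 1, j) \<in> shifted_diagram lam
                \<longrightarrow> T (i, j) < T (i + 1, j))}"

definition horizontal_adjacency :: "nat list \<Rightarrow> ((nat \<times> nat) \<Rightarrow> nat) \<Rightarrow> nat \<times> nat \<Rightarrow> bool" where
  "horizontal_adjacency lam T u \<longleftrightarrow>
     u \<in> shifted_diagram lam \<and> (fst u, snd u + 1) \<in> shifted_diagram lam
     \<and> T (fst u, snd u + 1) = T u + 1"

definition hadj_in_column :: "nat list \<Rightarrow> ((nat \<times> nat) \<Rightarrow> nat) \<Rightarrow> nat \<Rightarrow> nat" where
  "hadj_in_column lam T c =
     card {u \<in> shifted_diagram lam. snd u = c \<and> horizontal_adjacency lam T u}"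

end

theory Submission
  imports Defs "HOL-Combinatorics.Transposition"
begin

text \<open>Give each pair of a tableau \<open>T\<close> and an entry \<open>1 \<le> k < n = |\<lambda>|\<close> the weight
  \<open>[k + 1 lies right of column c] - [k lies right of column c]\<close>. For fixed \<open>T\<close> the weights
  telescope to \<open>1\<close>: the entry \<open>1\<close> sits in column \<open>1 \<le> c\<close>, and the entry \<open>n\<close> ends a row,
  and every row reaches column \<open>\<ell>(\<lambda>) > c\<close> because the parts are strictly decreasing.
  Exchanging the entries \<open>k\<close> and \<open>k + 1\<close> is a weight-reversing involution on the pairs for
  which it yields a tableau again, so these pairs contribute nothing. In the remaining pairs
  \<open>k\<close> and \<open>k + 1\<close> occupy neighbouring cells, and the weight is \<open>1\<close> exactly when they form a
  horizontal adjacency in column \<open>c\<close>. Hence, summed over all tableaux, the adjacencies in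
  column \<open>c\<close> are as many as the tableaux.\<close>

lemma mem_shifted_diagram_iff:
  "(i, j) \<in> shifted_diagram lam \<longleftrightarrow> 1 \<le> i \<and> i \<le> length lam \<and> i \<le> j \<and> j < i + lam ! (i - 1)"
proof
  assume "(i, j) \<in> shifted_diagram lam"
  then show "1 \<le> i \<and> i \<le> length lam \<and> i \<le> j \<and> j < i + lam ! (i - 1)"
    unfolding shifted_diagram_def by auto
next
  assume "1 \<le> i \<and> i \<le> length lam \<and> i \<le> j \<and> j < i + lam ! (i - 1)"
  then show "(i, j) \<in> shifted_diagram lam"
    unfolding shifted_diagram_def by (auto intro!: exI[of _ "j - i + 1"])
qed

lemma shifted_diagram_eq_UN:
  "shifted_diagram lam = (\<Union>i\<in>{1..length lam}. {i} \<times> {i..<i + lam ! (i - 1)})"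
  by (auto simp: mem_shifted_diagram_iff)

lemma finite_shifted_diagram: "finite (shifted_diagram lam)"
  by (simp add: shifted_diagram_eq_UN)

lemma card_shifted_diagram: "card (shifted_diagram lam) = sum_list lam"
proof -
  have "card (shifted_diagram lam) = (\<Sum>i\<in>{1..length lam}. card ({i} \<times> {i..<i + lam ! (i - 1)}))"
    unfolding shifted_diagram_eq_UN by (rule card_UN_disjoint) auto
  also have "\<dots> = (\<Sum>i<length lam. lam ! i)"
    using sum.atLeast1_atMost_eq[of "\<lambda>i. lam ! (i - 1)" "length lam"] by simp
  also have "\<dots> = sum_list lam"
    by (simp add: sum_list_sum_nth atLeast0LessThan)
  finally show ?thesis .
qed

lemma strict_partition_nth_pos:
  assumes "strict_partition lam" and "n < length lam"
  shows "0 < lam ! n"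
  using assms nth_mem[OF assms(2)] unfolding strict_partition_def by (cases "lam ! n") auto

lemma strict_partition_length_le:
  assumes "strict_partition lam" and "i < length lam"
  shows "length lam \<le> lam ! i + i"
proof -
  have dec: "lam ! Suc n < lam ! n" if "Suc n < length lam" for n
    using assms(1) that by (simp add: strict_partition_def sorted_wrt_iff_nth_less)
  from assms(2) have "i \<le> length lam - 1" by simp
  then show ?thesis
  proof (induction rule: inc_induct)
    case base
    have "0 < lam ! (length lam - 1)"
      using strict_partition_nth_pos[OF assms(1)] assms(2) by simp
    then show ?case by linarith
  next
    case (step n)
    then have "lam ! Suc n < lam ! n" using dec by simp
    with step.IH show ?case by simp
  qed
qed

lemma shifted_diagram_right:
  assumes "strict_partition lam" and "(i, j) \<in> shifted_diagram lam" and "j < length lam"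
  shows "(i, j + 1) \<in> shifted_diagram lam"
proof -
  have "1 \<le> i" "i \<le> length lam" "i \<le> j" "j < i + lam ! (i - 1)"
    using assms(2) by (auto simp: mem_shifted_diagram_iff)
  moreover have "length lam \<le> lam ! (i - 1) + (i - 1)"
    using strict_partition_length_le[OF assms(1), of "i - 1"] calculation by simp
  ultimately show ?thesis
    using assms(3) by (auto simp: mem_shifted_diagram_iff)
qed

lemma shifted_diagram_left_or_up:
  assumes "strict_partition lam" and "(i, j) \<in> shifted_diagram lam" and "2 \<le> j"
  shows "(i, j - 1) \<in> shifted_diagram lam \<or> (i - 1, j) \<in> shifted_diagram lam"
proof (cases "i < j")
  case True
  then show ?thesis using assms(2) by (auto simp: mem_shifted_diagram_iff)
next
  case False
  with assms(2,3) have ij: "i = j" "2 \<le> i" "i \<le> length lam"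
    by (auto simp: mem_shifted_diagram_iff)
  have "lam ! (i - 1) < lam ! (i - 2)"
    using assms(1) ij sorted_wrt_nth_less[of "(>)" lam "i - 2" "i - 1"]
    by (simp add: strict_partition_def)
  moreover have "0 < lam ! (i - 1)"
    using strict_partition_nth_pos[OF assms(1)] ij by simp
  ultimately have "1 < lam ! (i - 1 - 1)"
    by (simp add: numeral_2_eq_2 diff_diff_add)
  then have "(i - 1, j) \<in> shifted_diagram lam"
    using ij by (simp add: mem_shifted_diagram_iff) arith
  then show ?thesis ..
qed

lemma shifted_SYTD:
  assumes "T \<in> shifted_SYT lam"
  shows shifted_SYT_inj: "inj_on T (shifted_diagram lam)"
    and shifted_SYT_image: "T ` shifted_diagram lam = {1..sum_list lam}"
    and shifted_SYT_outside: "u \<notin> shifted_diagram lam \<Longrightarrow> T u = 0"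
    and shifted_SYT_row_less:
      "(i, j) \<in> shifted_diagram lam \<Longrightarrow> (i, j + 1) \<in> shifted_diagram lam \<Longrightarrow> T (i, j) < T (i, j + 1)"
    and shifted_SYT_column_less:
      "(i, j) \<in> shifted_diagram lam \<Longrightarrow> (i + 1, j) \<in> shifted_diagram lam \<Longrightarrow> T (i, j) < T (i + 1, j)"
  using assms unfolding shifted_SYT_def bij_betw_def by blast+

lemma finite_shifted_SYT: "finite (shifted_SYT lam)"
proof (rule finite_subset)
  show "shifted_SYT lam \<subseteq> {T. \<forall>u. (u \<in> shifted_diagram lam \<longrightarrow> T u \<in> {1..sum_list lam})
      \<and> (u \<notin> shifted_diagram lam \<longrightarrow> T u = 0)}"
    unfolding shifted_SYT_def bij_betw_def by auto
  show "finite \<dots>"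
    by (intro finite_set_of_finite_funs finite_shifted_diagram) simp
qed

definition entry_cell :: "nat list \<Rightarrow> (nat \<times> nat \<Rightarrow> nat) \<Rightarrow> nat \<Rightarrow> nat \<times> nat" where
  "entry_cell lam T k = inv_into (shifted_diagram lam) T k"

lemma entry_cell:
  assumes "T \<in> shifted_SYT lam" and "k \<in> {1..sum_list lam}"
  shows entry_cell_mem: "entry_cell lam T k \<in> shifted_diagram lam"
    and entry_cell_entry: "T (entry_cell lam T k) = k"
  using assms shifted_SYT_image[OF assms(1)] unfolding entry_cell_def
  by (metis inv_into_into, metis f_inv_into_f)

lemma entry_cell_eq:
  assumes "T \<in> shifted_SYT lam" and "u \<in> shifted_diagram lam"
  shows "entry_cell lam T (T u) = u"
  using assms shifted_SYT_inj[OF assms(1)] unfolding entry_cell_def by (simp add: inv_into_f_f)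

lemma shifted_SYT_first_entry_column:
  assumes "strict_partition lam" and T: "T \<in> shifted_SYT lam" and "lam \<noteq> []"
  shows "snd (entry_cell lam T 1) = 1"
proof -
  obtain i j where ij: "entry_cell lam T 1 = (i, j)" by fastforce
  have "0 < lam ! 0" using strict_partition_nth_pos[OF assms(1)] assms(3) by simp
  then have "1 \<le> sum_list lam"
    using elem_le_sum_list[of 0 lam] assms(3) by simp
  then have mem: "(i, j) \<in> shifted_diagram lam" and one: "T (i, j) = 1"
    using entry_cell[OF T, of 1] ij by auto
  have "\<not> 2 \<le> j"
  proof
    assume "2 \<le> j"
    from shifted_diagram_left_or_up[OF assms(1) mem this] show False
    proof
      assume left: "(i, j - 1) \<in> shifted_diagram lam"
      have "T (i, j - 1) < T (i, j)"
        using shifted_SYT_row_less[OF T left] mem \<open>2 \<le> j\<close> by simp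
      moreover have "T (i, j - 1) \<ge> 1" using left shifted_SYT_image[OF T] by force
      ultimately show False using one by simp
    next
      assume up: "(i - 1, j) \<in> shifted_diagram lam"
      then have "1 \<le> i - 1" by (simp add: mem_shifted_diagram_iff)
      then have "T (i - 1, j) < T (i, j)"
        using shifted_SYT_column_less[OF T up] mem by simp
      moreover have "T (i - 1, j) \<ge> 1" using up shifted_SYT_image[OF T] by force
      ultimately show False using one by simp
    qed
  qed
  with mem show ?thesis using ij by (auto simp: mem_shifted_diagram_iff)
qed

lemma shifted_SYT_last_entry_column:
  assumes "strict_partition lam" and T: "T \<in> shifted_SYT lam" and "lam \<noteq> []"
  shows "length lam \<le> snd (entry_cell lam T (sum_list lam))"
proof (rule ccontr)
  obtain i j where ij: "entry_cell lam T (sum_list lam) = (i, j)" by fastforce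
  have "0 < lam ! 0" using strict_partition_nth_pos[OF assms(1)] assms(3) by simp
  then have "1 \<le> sum_list lam"
    using elem_le_sum_list[of 0 lam] assms(3) by simp
  then have mem: "(i, j) \<in> shifted_diagram lam" and last: "T (i, j) = sum_list lam"
    using entry_cell[OF T, of "sum_list lam"] ij by auto
  assume "\<not> length lam \<le> snd (entry_cell lam T (sum_list lam))"
  then have right: "(i, j + 1) \<in> shifted_diagram lam"
    using shifted_diagram_right[OF assms(1) mem] ij by simp
  then have "T (i, j + 1) \<le> sum_list lam" using shifted_SYT_image[OF T] by force
  then show False using shifted_SYT_row_less[OF T mem right] last by simp
qed

definition swap_entries :: "nat \<Rightarrow> (nat \<times> nat \<Rightarrow> nat) \<Rightarrow> nat \<times> nat \<Rightarrow> nat" where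
  "swap_entries k T = Transposition.transpose k (Suc k) \<circ> T"

definition adjacent_entries :: "nat list \<Rightarrow> (nat \<times> nat \<Rightarrow> nat) \<Rightarrow> nat \<Rightarrow> bool" where
  "adjacent_entries lam T k \<longleftrightarrow>
     (\<exists>i j. (i, j) \<in> shifted_diagram lam \<and> T (i, j) = k
       \<and> ((i, j + 1) \<in> shifted_diagram lam \<and> T (i, j + 1) = Suc k
          \<or> (i + 1, j) \<in> shifted_diagram lam \<and> T (i + 1, j) = Suc k))"

lemma swap_entries_swap_entries [simp]: "swap_entries k (swap_entries k T) = T"
  by (simp add: swap_entries_def fun_eq_iff)

lemma transpose_Suc_less:
  assumes "a < b" and "\<not> (a = k \<and> b = Suc k)"
  shows "Transposition.transpose k (Suc k) a < Transposition.transpose k (Suc k) b"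
  using assms by (auto simp: transpose_def)

lemma swap_entries_in_shifted_SYT_iff:
  assumes T: "T \<in> shifted_SYT lam" and k: "1 \<le> k" "k < sum_list lam"
  shows "swap_entries k T \<in> shifted_SYT lam \<longleftrightarrow> \<not> adjacent_entries lam T k"
proof
  assume S: "swap_entries k T \<in> shifted_SYT lam"
  show "\<not> adjacent_entries lam T k"
  proof
    assume "adjacent_entries lam T k"
    then obtain i j where "(i, j) \<in> shifted_diagram lam" "T (i, j) = k"
      "(i, j + 1) \<in> shifted_diagram lam \<and> T (i, j + 1) = Suc k
       \<or> (i + 1, j) \<in> shifted_diagram lam \<and> T (i + 1, j) = Suc k"
      unfolding adjacent_entries_def by blast
    then show False
      using shifted_SYT_row_less[OF S] shifted_SYT_column_less[OF S]
      by (fastforce simp: swap_entries_def)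
  qed
next
  assume nadj: "\<not> adjacent_entries lam T k"
  have "bij_betw (Transposition.transpose k (Suc k)) {1..sum_list lam} {1..sum_list lam}"
    using k by simp
  moreover have "bij_betw T (shifted_diagram lam) {1..sum_list lam}"
    using shifted_SYT_inj[OF T] shifted_SYT_image[OF T] by (simp add: bij_betw_def)
  ultimately have "bij_betw (swap_entries k T) (shifted_diagram lam) {1..sum_list lam}"
    unfolding swap_entries_def by (rule bij_betw_trans[rotated])
  moreover have "swap_entries k T u = 0" if "u \<notin> shifted_diagram lam" for u
    using shifted_SYT_outside[OF T that] k by (simp add: swap_entries_def)
  ultimately show "swap_entries k T \<in> shifted_SYT lam"
    using nadj shifted_SYT_row_less[OF T] shifted_SYT_column_less[OF T]
    unfolding shifted_SYT_def adjacent_entries_def swap_entries_def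
    by (auto intro!: transpose_Suc_less)
qed

lemma entry_cell_swap_entries:
  assumes T: "T \<in> shifted_SYT lam" and k: "1 \<le> k" "k < sum_list lam"
  shows "entry_cell lam (swap_entries k T) k = entry_cell lam T (Suc k)"
    and "entry_cell lam (swap_entries k T) (Suc k) = entry_cell lam T k"
proof -
  have inj: "inj_on (swap_entries k T) (shifted_diagram lam)"
    unfolding swap_entries_def using shifted_SYT_inj[OF T] by (simp add: comp_inj_on)
  show "entry_cell lam (swap_entries k T) k = entry_cell lam T (Suc k)"
    using entry_cell[OF T, of "Suc k"] k unfolding entry_cell_def
    by (intro inv_into_f_eq[OF inj]) (auto simp: swap_entries_def)
  show "entry_cell lam (swap_entries k T) (Suc k) = entry_cell lam T k"
    using entry_cell[OF T, of k] k unfolding entry_cell_def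
    by (intro inv_into_f_eq[OF inj]) (auto simp: swap_entries_def)
qed

definition column_crossing :: "nat list \<Rightarrow> nat \<Rightarrow> (nat \<times> nat \<Rightarrow> nat) \<Rightarrow> nat \<Rightarrow> real" where
  "column_crossing lam c T k =
     of_bool (c < snd (entry_cell lam T (Suc k))) - of_bool (c < snd (entry_cell lam T k))"

lemma column_crossing_swap_entries:
  assumes "T \<in> shifted_SYT lam" and "1 \<le> k" "k < sum_list lam"
  shows "column_crossing lam c (swap_entries k T) k = - column_crossing lam c T k"
  using entry_cell_swap_entries[OF assms] by (simp add: column_crossing_def)

lemma sum_column_crossing:
  assumes "strict_partition lam" and "1 \<le> c" "c < length lam" and T: "T \<in> shifted_SYT lam"
  shows "(\<Sum>k\<in>{1..<sum_list lam}. column_crossing lam c T k) = 1"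
proof -
  have ne: "lam \<noteq> []" using assms(3) by auto
  then have "0 < lam ! 0" using strict_partition_nth_pos[OF assms(1)] by simp
  then have "1 \<le> sum_list lam"
    using elem_le_sum_list[of 0 lam] ne by simp
  then have "(\<Sum>k\<in>{1..<sum_list lam}. column_crossing lam c T k)
      = of_bool (c < snd (entry_cell lam T (sum_list lam))) - of_bool (c < snd (entry_cell lam T 1))"
    unfolding column_crossing_def by (rule sum_Suc_diff')
  also have "\<dots> = 1"
    using shifted_SYT_first_entry_column[OF assms(1) T ne]
      shifted_SYT_last_entry_column[OF assms(1) T ne] assms(2,3) by simp
  finally show ?thesis .
qed

lemma column_crossing_adjacent_entries:
  assumes T: "T \<in> shifted_SYT lam" and "adjacent_entries lam T k"
  shows "column_crossing lam c T k
    = of_bool (snd (entry_cell lam T k) = c \<and> horizontal_adjacency lam T (entry_cell lam T k))"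
proof -
  obtain i j where mem: "(i, j) \<in> shifted_diagram lam" and Tij: "T (i, j) = k" and
    next_cell: "(i, j + 1) \<in> shifted_diagram lam \<and> T (i, j + 1) = Suc k
      \<or> (i + 1, j) \<in> shifted_diagram lam \<and> T (i + 1, j) = Suc k"
    using assms(2) unfolding adjacent_entries_def by blast
  have cell_k: "entry_cell lam T k = (i, j)" using entry_cell_eq[OF T mem] Tij by simp
  from next_cell show ?thesis
  proof
    assume right: "(i, j + 1) \<in> shifted_diagram lam \<and> T (i, j + 1) = Suc k"
    then have "entry_cell lam T (Suc k) = (i, j + 1)" using entry_cell_eq[OF T] by force
    then show ?thesis
      using cell_k right mem Tij by (auto simp: column_crossing_def horizontal_adjacency_def)
  next
    assume below: "(i + 1, j) \<in> shifted_diagram lam \<and> T (i + 1, j) = Suc k"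
    then have "entry_cell lam T (Suc k) = (i + 1, j)" using entry_cell_eq[OF T] by force
    moreover have "\<not> horizontal_adjacency lam T (i, j)"
    proof
      assume "horizontal_adjacency lam T (i, j)"
      then have "(i, j + 1) \<in> shifted_diagram lam" "T (i, j + 1) = T (i + 1, j)"
        using below Tij by (auto simp: horizontal_adjacency_def)
      then have "(i, j + 1) = (i + 1, j)"
        using below by (intro inj_onD[OF shifted_SYT_inj[OF T]]) auto
      then show False by simp
    qed
    ultimately show ?thesis using cell_k by (simp add: column_crossing_def)
  qed
qed

lemma sum_column_crossing_adjacent_entries:
  assumes T: "T \<in> shifted_SYT lam"
  shows "(\<Sum>k\<in>{k\<in>{1..<sum_list lam}. adjacent_entries lam T k}. column_crossing lam c T k)
    = real (hadj_in_column lam T c)"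
proof -
  define A where "A = {u \<in> shifted_diagram lam. snd u = c \<and> horizontal_adjacency lam T u}"
  define K where "K = {k\<in>{1..<sum_list lam}. adjacent_entries lam T k}"
  have "K \<inter> {k. entry_cell lam T k \<in> A} = T ` A"
  proof (intro equalityI subsetI)
    fix k assume "k \<in> K \<inter> {k. entry_cell lam T k \<in> A}"
    then show "k \<in> T ` A"
      using entry_cell_entry[OF T, of k] unfolding K_def by (auto intro: rev_image_eqI)
  next
    fix k assume "k \<in> T ` A"
    then obtain i where u: "(i, c) \<in> A" "k = T (i, c)"
      unfolding A_def by auto
    then have mem: "(i, c) \<in> shifted_diagram lam" "(i, c + 1) \<in> shifted_diagram lam"
      and Suc_k: "T (i, c + 1) = Suc k"
      unfolding A_def horizontal_adjacency_def by auto
    then have "k \<in> {1..<sum_list lam}"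
      using shifted_SYT_image[OF T] u(2) by (force simp: image_iff)
    moreover have "adjacent_entries lam T k"
      unfolding adjacent_entries_def using mem Suc_k u(2) by blast
    ultimately show "k \<in> K \<inter> {k. entry_cell lam T k \<in> A}"
      using entry_cell_eq[OF T mem(1)] u unfolding K_def by simp
  qed
  moreover have "card (T ` A) = card A"
    by (rule card_image, rule inj_on_subset[OF shifted_SYT_inj[OF T]]) (auto simp: A_def)
  moreover have "column_crossing lam c T k = of_bool (entry_cell lam T k \<in> A)" if "k \<in> K" for k
    using column_crossing_adjacent_entries[OF T, of k c] entry_cell_mem[OF T, of k] that
    by (simp add: K_def A_def)
  ultimately show ?thesis
    unfolding hadj_in_column_def A_def[symmetric] K_def[symmetric] by (simp add: K_def)
qed

lemma sum_list_take_mono: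
  fixes xs :: "nat list"
  assumes "m \<le> m'"
  shows "sum_list (take m xs) \<le> sum_list (take m' xs)"
proof -
  have "take m' xs = take m xs @ take (m' - m) (drop m xs)"
    using assms take_add[of m "m' - m" xs] by simp
  then show ?thesis by simp
qed

definition row_filling :: "nat list \<Rightarrow> nat \<times> nat \<Rightarrow> nat" where
  "row_filling lam u =
     (if u \<in> shifted_diagram lam then sum_list (take (fst u - 1) lam) + (snd u - fst u + 1) else 0)"

lemma row_filling_bounds:
  assumes "(i, j) \<in> shifted_diagram lam"
  shows "sum_list (take (i - 1) lam) < row_filling lam (i, j)"
    and "row_filling lam (i, j) \<le> sum_list (take i lam)"
proof -
  have "1 \<le> i" "i \<le> length lam" "i \<le> j" "j < i + lam ! (i - 1)"
    using assms by (auto simp: mem_shifted_diagram_iff)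
  moreover have "sum_list (take i lam) = sum_list (take (i - 1) lam) + lam ! (i - 1)"
    using calculation take_Suc_conv_app_nth[of "i - 1" lam] by simp
  ultimately show "sum_list (take (i - 1) lam) < row_filling lam (i, j)"
    and "row_filling lam (i, j) \<le> sum_list (take i lam)"
    using assms by (auto simp: row_filling_def)
qed

lemma row_filling_less:
  assumes "(i, j) \<in> shifted_diagram lam" and "(i', j') \<in> shifted_diagram lam"
    and "i < i' \<or> i = i' \<and> j < j'"
  shows "row_filling lam (i, j) < row_filling lam (i', j')"
  using assms(3)
proof
  assume "i < i'"
  have "row_filling lam (i, j) \<le> sum_list (take i lam)" using row_filling_bounds(2)[OF assms(1)] .
  also have "\<dots> \<le> sum_list (take (i' - 1) lam)" using \<open>i < i'\<close> by (intro sum_list_take_mono) simp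
  also have "\<dots> < row_filling lam (i', j')" using row_filling_bounds(1)[OF assms(2)] .
  finally show ?thesis .
next
  assume "i = i' \<and> j < j'"
  then show ?thesis
    using assms(1,2) by (auto simp: row_filling_def mem_shifted_diagram_iff)
qed

lemma row_filling_in_shifted_SYT: "row_filling lam \<in> shifted_SYT lam"
proof -
  let ?D = "shifted_diagram lam"
  have inj: "inj_on (row_filling lam) ?D"
  proof (rule inj_onI)
    fix u v assume uv: "u \<in> ?D" "v \<in> ?D" "row_filling lam u = row_filling lam v"
    obtain i j i' j' where "u = (i, j)" "v = (i', j')" by fastforce
    with uv show "u = v"
      using row_filling_less[of i j lam i' j'] row_filling_less[of i' j' lam i j]
      by (metis less_irrefl linorder_neq_iff)
  qed
  have "row_filling lam ` ?D \<subseteq> {1..sum_list lam}"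
  proof (clarsimp)
    fix i j assume mem: "(i, j) \<in> ?D"
    then have "sum_list (take i lam) \<le> sum_list lam"
      using sum_list_take_mono[of i "length lam" lam] by (simp add: mem_shifted_diagram_iff)
    then show "Suc 0 \<le> row_filling lam (i, j) \<and> row_filling lam (i, j) \<le> sum_list lam"
      using row_filling_bounds[OF mem] by linarith
  qed
  moreover have "card (row_filling lam ` ?D) = card {1..sum_list lam}"
    using card_image[OF inj] card_shifted_diagram by simp
  ultimately have "row_filling lam ` ?D = {1..sum_list lam}"
    by (intro card_subset_eq) auto
  moreover have "row_filling lam (i, j) < row_filling lam (i, j + 1)"
    if "(i, j) \<in> ?D" "(i, j + 1) \<in> ?D" for i j
    using row_filling_less[OF that] by simp
  moreover have "row_filling lam (i, j) < row_filling lam (i + 1, j)"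
    if "(i, j) \<in> ?D" "(i + 1, j) \<in> ?D" for i j
    using row_filling_less[OF that] by simp
  ultimately show ?thesis
    using inj unfolding shifted_SYT_def bij_betw_def by (simp add: row_filling_def)
qed

lemma sum_eq_0_by_sign_reversing_involution:
  fixes f :: "'a \<Rightarrow> 'b::linordered_ab_group_add"
  assumes "\<And>x. x \<in> A \<Longrightarrow> h x \<in> A" and "\<And>x. x \<in> A \<Longrightarrow> h (h x) = x"
    and "\<And>x. x \<in> A \<Longrightarrow> f (h x) = - f x"
  shows "sum f A = 0"
proof -
  have "sum f A = sum (f \<circ> h) A"
    by (rule sum.reindex_bij_witness[of A h h]) (simp_all add: assms)
  also have "\<dots> = - sum f A"
    by (simp add: assms sum_negf)
  finally show ?thesis by simp
qed

lemma sum_hadj_in_column: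
  assumes "strict_partition lam" and "1 \<le> c" "c < length lam"
  shows "(\<Sum>T\<in>shifted_SYT lam. real (hadj_in_column lam T c)) = real (card (shifted_SYT lam))"
proof -
  define S where "S = shifted_SYT lam"
  define K where "K = {1..<sum_list lam}"
  define P where "P = {(T, k). T \<in> S \<and> k \<in> K \<and> swap_entries k T \<in> S}"
  define Q where "Q = {(T, k). T \<in> S \<and> k \<in> K \<and> adjacent_entries lam T k}"
  let ?w = "\<lambda>(T, k). column_crossing lam c T k"
  have fin: "finite (S \<times> K)" using finite_shifted_SYT by (simp add: S_def K_def)
  have "real (card S) = (\<Sum>(T, k)\<in>S \<times> K. column_crossing lam c T k)"
    using sum_column_crossing[OF assms] by (simp add: sum.cartesian_product[symmetric] S_def K_def)
  also have "S \<times> K = P \<union> Q" "P \<inter> Q = {}"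
    using swap_entries_in_shifted_SYT_iff unfolding P_def Q_def S_def K_def by auto
  then have "(\<Sum>(T, k)\<in>S \<times> K. column_crossing lam c T k) = sum ?w P + sum ?w Q"
    using fin by (simp add: sum.union_disjoint)
  also have "sum ?w P = 0"
    by (rule sum_eq_0_by_sign_reversing_involution[where h = "\<lambda>(T, k). (swap_entries k T, k)"])
      (auto simp: P_def S_def K_def column_crossing_swap_entries)
  also have "sum ?w Q = (\<Sum>T\<in>S. \<Sum>k\<in>{k\<in>K. adjacent_entries lam T k}. column_crossing lam c T k)"
    unfolding Q_def using finite_shifted_SYT
    by (subst sum.Sigma) (auto simp: S_def K_def intro: sum.cong)
  also have "\<dots> = (\<Sum>T\<in>S. real (hadj_in_column lam T c))"
    using sum_column_crossing_adjacent_entries by (simp add: S_def K_def)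
  finally show ?thesis by (simp add: S_def)
qed

theorem mainTheorem14:
  fixes lam :: "nat list" and c :: nat
  assumes "strict_partition lam" and "1 \<le> c" and "c < length lam"
  shows "(\<Sum>T\<in>shifted_SYT lam. real (hadj_in_column lam T c)) / real (card (shifted_SYT lam)) = 1"
proof -
  have "card (shifted_SYT lam) \<noteq> 0"
    using finite_shifted_SYT row_filling_in_shifted_SYT by (auto simp: card_eq_0_iff)
  then show ?thesis using sum_hadj_in_column[OF assms] by simp
qed

end
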